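(* Let $g,h>\tfrac12$, let $\mathcal{D}=((d_1,t_1),\ldots,(d_M,t_M))$ be an ordered list of pairwise distinct seed labels for the parameters $(g,h)$, and let $\mathcal{D}'=((d_1,\bar t_1),\ldots,(d_M,\bar t_M))$, where $\bar{\mathrm{I}}=\mathrm{II}$ and $\bar{\mathrm{II}}=\mathrm{I}$ (so $\mathcal{D}'$ is a list of seed labels for the parameters $(h,g)$). Then for every $n\in\mathbb{Z}_{\ge0}$ and $-1<\eta<1$, $$P_{\mathcal{D},n}\big(-\eta;(g,h)\big)=(-1)^{n+\frac12M(M+1)+\sum_{k=1}^Md_k}\,P_{\mathcal{D}',n}\big(\eta;(h,g)\big),$$ $$\Xi_{\mathcal{D}}\big(-\eta;(g,h)\big)=(-1)^{\frac12M(M-1)+\sum_{k=1}^Md_k}\,\Xi_{\mathcal{D}'}\big(\eta;(h,g)\big).$$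
   Context: $[a]'$ denotes the greatest integer strictly less than $a$; $(a)_k=a(a+1)\cdots(a+k-1)$, $(a)_0=1$. For real $\alpha,\beta$, $m\in\mathbb{Z}_{\ge0}$, $P^{(\alpha,\beta)}_m(\eta)=\frac{1}{m!}\sum_{k=0}^m\frac{(-m)_k(m+\alpha+\beta+1)_k(\alpha+k+1)_{m-k}}{k!}\big(\frac{1-\eta}{2}\big)^k$. For parameters $(g,h)$ with $g,h>\frac12$, a seed label is a pair $(\mathrm{v},t)$, $t\in\{\mathrm{I},\mathrm{II}\}$, with $\mathrm{v}\in\{0,\ldots,[h-\frac12]'\}$ if $t=\mathrm{I}$ and $\mathrm{v}\in\{0,\ldots,[g-\frac12]'\}$ if $t=\mathrm{II}$. For $-1<\eta<1$ let $\mu_{(\mathrm{v},\mathrm{I})}(\eta;(g,h))=\big(\frac{1+\eta}{2}\big)^{\frac12-h}P^{(g-\frac12,\frac12-h)}_{\mathrm{v}}(\eta)$, $\mu_{(\mathrm{v},\mathrm{II})}(\eta;(g,h))=\big(\frac{1-\eta}{2}\big)^{\frac12-g}P^{(\frac12-g,h-\frac12)}_{\mathrm{v}}(\eta)$, $P_n(\eta;(g,h))=P^{(g-\frac12,h-\frac12)}_n(\eta)$, and $\mathrm{W}[f_1,\ldots,f_m](\eta)=\det\big(\frac{d^{j-1}f_k}{d\eta^{j-1}}\big)_{1\le j,k\le m}$. For an ordered list $\mathcal{D}=((d_1,t_1),\ldots,(d_M,t_M))$ of seed labels with $M_{\mathrm{I}}$ of Type I and $M_{\mathrm{II}}$ of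 Type II, $\Xi_{\mathcal{D}}(\eta;(g,h))=\mathrm{W}[\mu_{(d_1,t_1)},\ldots,\mu_{(d_M,t_M)}](\eta)\big(\frac{1-\eta}{2}\big)^{(M_{\mathrm{I}}+g-\frac12)M_{\mathrm{II}}}\big(\frac{1+\eta}{2}\big)^{(M_{\mathrm{II}}+h-\frac12)M_{\mathrm{I}}}$ and $P_{\mathcal{D},n}(\eta;(g,h))=\mathrm{W}[\mu_{(d_1,t_1)},\ldots,\mu_{(d_M,t_M)},P_n](\eta)\big(\frac{1-\eta}{2}\big)^{(M_{\mathrm{I}}+g+\frac12)M_{\mathrm{II}}}\big(\frac{1+\eta}{2}\big)^{(M_{\mathrm{II}}+h+\frac12)M_{\mathrm{I}}}$, where all $\mu$'s and $P_n$ are taken at parameters $(g,h)$ (the multi-indexed Jacobi polynomials). These are polynomials in $\eta$, so they may be evaluated at $-\eta$. *)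

theory Defs
  imports "HOL-Analysis.Derivative" "Jordan_Normal_Form.Determinant"
begin

datatype stype = TI | TII

type_synonym seed = "nat \<times> stype"

fun flip_type :: "stype \<Rightarrow> stype" where
  "flip_type TI = TII" | "flip_type TII = TI"

definition jacobiP :: "real \<Rightarrow> real \<Rightarrow> nat \<Rightarrow> real \<Rightarrow> real" where
  "jacobiP \<alpha> \<beta> m \<eta> = (1 / fact m) *
     (\<Sum>k=0..m. pochhammer (- real m) k * pochhammer (real m + \<alpha> + \<beta> + 1) k
        * pochhammer (\<alpha> + real k + 1) (m - k) / fact k * ((1 - \<eta>) / 2) ^ k)"

text \<open>Seed labels for parameters (g,h): v <= [h-1/2]' means v < h - 1/2 (type I),
  v <= [g-1/2]' means v < g - 1/2 (type II).\<close>
fun seed_label :: "real \<Rightarrow> real \<Rightarrow> seed \<Rightarrow> bool" where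
  "seed_label g h (v, TI) = (real v < h - 1/2)"
| "seed_label g h (v, TII) = (real v < g - 1/2)"

fun mu :: "real \<Rightarrow> real \<Rightarrow> seed \<Rightarrow> real \<Rightarrow> real" where
  "mu g h (v, TI) \<eta> = ((1 + \<eta>) / 2) powr (1/2 - h) * jacobiP (g - 1/2) (1/2 - h) v \<eta>"
| "mu g h (v, TII) \<eta> = ((1 - \<eta>) / 2) powr (1/2 - g) * jacobiP (1/2 - g) (h - 1/2) v \<eta>"

definition Pgh :: "real \<Rightarrow> real \<Rightarrow> nat \<Rightarrow> real \<Rightarrow> real" where
  "Pgh g h n \<eta> = jacobiP (g - 1/2) (h - 1/2) n \<eta>"

definition wronskian :: "(real \<Rightarrow> real) list \<Rightarrow> real \<Rightarrow> real" where
  "wronskian fs \<eta> = Determinant.det (Matrix.mat (length fs) (length fs) (\<lambda>(j, k). (deriv ^^ j) (fs ! k) \<eta>))"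

definition count_I :: "seed list \<Rightarrow> nat" where
  "count_I D = length (filter (\<lambda>s. snd s = TI) D)"

definition count_II :: "seed list \<Rightarrow> nat" where
  "count_II D = length (filter (\<lambda>s. snd s = TII) D)"

definition Xi :: "seed list \<Rightarrow> real \<Rightarrow> real \<Rightarrow> real \<Rightarrow> real" where
  "Xi D g h \<eta> = wronskian (map (mu g h) D) \<eta>
     * ((1 - \<eta>) / 2) powr ((real (count_I D) + g - 1/2) * real (count_II D))
     * ((1 + \<eta>) / 2) powr ((real (count_II D) + h - 1/2) * real (count_I D))"

definition PD :: "seed list \<Rightarrow> nat \<Rightarrow> real \<Rightarrow> real \<Rightarrow> real \<Rightarrow> real" where
  "PD D n g h \<eta> = wronskian (map (mu g h) D @ [Pgh g h n]) \<eta>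
     * ((1 - \<eta>) / 2) powr ((real (count_I D) + g + 1/2) * real (count_II D))
     * ((1 + \<eta>) / 2) powr ((real (count_II D) + h + 1/2) * real (count_I D))"

definition flipD :: "seed list \<Rightarrow> seed list" where
  "flipD D = map (\<lambda>(d, t). (d, flip_type t)) D"

end

theory Submission
  imports Defs
begin

text \<open>Under \<eta> \<mapsto> -\<eta> the endpoint factors (1 - \<eta>)/2 and (1 + \<eta>)/2 are exchanged, and Jacobi
  polynomials satisfy P^(\<alpha>,\<beta>)_m(-x) = (-1)^m P^(\<beta>,\<alpha>)_m(x). Hence the seed function (v,t) for (g,h)
  at -\<eta> is (-1)^v times the seed function of the flipped label for (h,g) at \<eta>, and P_n picks up
  (-1)^n. In the Wronskian the row of j-th derivatives acquires the chain-rule sign (-1)^j, which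
  accounts for (-1)^(M(M-1)/2) with M functions; the prefactors of \<Xi> and P_D match because flipping
  the types swaps M_I and M_II.

  Since deriv is defined by choice, the chain rule applies only to functions that are differentiable
  to all orders on (-1,1); this holds because the finite sums of c ((1+x)/2)^r ((1-x)/2)^s are closed
  under differentiation.\<close>

section \<open>Reflection of Jacobi polynomials\<close>

lemma sum_Suc_choose_mult:
  fixes u :: "nat \<Rightarrow> 'a::comm_semiring_1"
  shows "(\<Sum>i\<le>Suc n. of_nat (Suc n choose i) * u i) = (\<Sum>i\<le>n. of_nat (n choose i) * (u i + u (Suc i)))"
proof -
  have "(\<Sum>i\<le>Suc n. of_nat (Suc n choose i) * u i)
      = u 0 + (\<Sum>i\<le>n. of_nat (n choose Suc i) * u (Suc i)) + (\<Sum>i\<le>n. of_nat (n choose i) * u (Suc i))"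
    by (subst sum.atMost_Suc_shift) (simp add: sum.distrib algebra_simps del: sum.atMost_Suc)
  also have "u 0 + (\<Sum>i\<le>n. of_nat (n choose Suc i) * u (Suc i)) = (\<Sum>i\<le>Suc n. of_nat (n choose i) * u i)"
    by (subst sum.atMost_Suc_shift) (simp del: sum.atMost_Suc)
  finally show ?thesis by (simp add: sum.distrib binomial_eq_0 algebra_simps)
qed

lemma sum_alternating_choose_pochhammer:
  fixes A c :: "'a::comm_ring_1"
  shows "(\<Sum>i\<le>L. (-1)^i * of_nat (L choose i) * pochhammer c i * pochhammer (A + of_nat i) (L - i))
    = pochhammer (A - c) L"
proof (induction L arbitrary: A)
  case 0
  then show ?case by simp
next
  case (Suc L)
  have step: "(-1)^i * pochhammer c i * pochhammer (A + of_nat i) (Suc L - i)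
      + (-1)^Suc i * pochhammer c (Suc i) * pochhammer (A + of_nat (Suc i)) (Suc L - Suc i)
      = (A - c) * ((-1)^i * pochhammer c i * pochhammer (A + 1 + of_nat i) (L - i))" if "i \<le> L" for i
  proof -
    have "pochhammer (A + of_nat i) (Suc L - i) = (A + of_nat i) * pochhammer (A + 1 + of_nat i) (L - i)"
      using that by (simp add: Suc_diff_le pochhammer_rec algebra_simps)
    then show ?thesis by (simp add: pochhammer_rec' algebra_simps)
  qed
  define u where "u i = (-1)^i * pochhammer c i * pochhammer (A + of_nat i) (Suc L - i)" for i
  have "(\<Sum>i\<le>Suc L. (-1)^i * of_nat (Suc L choose i) * pochhammer c i * pochhammer (A + of_nat i) (Suc L - i))
      = (\<Sum>i\<le>Suc L. of_nat (Suc L choose i) * u i)"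
    by (simp add: u_def mult_ac)
  also have "\<dots> = (\<Sum>i\<le>L. of_nat (L choose i) * (u i + u (Suc i)))"
    by (rule sum_Suc_choose_mult)
  also have "\<dots> = (\<Sum>i\<le>L. of_nat (L choose i) * ((A - c) * ((-1)^i * pochhammer c i * pochhammer (A + 1 + of_nat i) (L - i))))"
    by (intro sum.cong refl) (simp only: u_def step atMost_iff)
  also have "\<dots> = (A - c) * (\<Sum>i\<le>L. (-1)^i * of_nat (L choose i) * pochhammer c i * pochhammer (A + 1 + of_nat i) (L - i))"
    by (simp add: sum_distrib_left mult_ac)
  also have "\<dots> = (A - c) * pochhammer (A + 1 - c) L"
    by (simp only: Suc.IH)
  finally show ?case by (simp add: pochhammer_rec algebra_simps)
qed

lemma sum_atMost_triangle_swap: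
  "(\<Sum>k\<le>(m::nat). \<Sum>j\<le>k. a k j) = (\<Sum>j\<le>m. \<Sum>k=j..m. a k j :: 'a::comm_monoid_add)"
proof (induction m)
  case (Suc m)
  have "(\<Sum>j\<le>m. \<Sum>k=j..Suc m. a k j) = (\<Sum>j\<le>m. \<Sum>k=j..m. a k j) + (\<Sum>j\<le>m. a (Suc m) j)"
    by (simp add: sum.distrib)
  then show ?case using Suc.IH by (simp add: add_ac)
qed simp

lemma sum_mult_one_minus_power:
  fixes c :: "nat \<Rightarrow> 'a::comm_ring_1"
  shows "(\<Sum>k\<le>m. c k * (1 - t)^k) = (\<Sum>j\<le>m. (-1)^j * (\<Sum>k=j..m. of_nat (k choose j) * c k) * t^j)"
proof -
  have "(\<Sum>k\<le>m. c k * (1 - t)^k) = (\<Sum>k\<le>m. \<Sum>j\<le>k. (-1)^j * (of_nat (k choose j) * c k) * t^j)"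
  proof (intro sum.cong refl)
    fix k
    have "(1 - t)^k = (\<Sum>j\<le>k. of_nat (k choose j) * (-t)^j)"
      using binomial_ring[of "-t" 1 k] by simp
    then show "c k * (1 - t)^k = (\<Sum>j\<le>k. (-1)^j * (of_nat (k choose j) * c k) * t^j)"
      by (simp add: power_minus[of t] sum_distrib_left mult_ac)
  qed
  also have "\<dots> = (\<Sum>j\<le>m. (-1)^j * (\<Sum>k=j..m. of_nat (k choose j) * c k) * t^j)"
    by (simp add: sum_atMost_triangle_swap sum_distrib_left sum_distrib_right)
  finally show ?thesis .
qed

lemma sum_choose_mult_choose:
  fixes F :: "nat \<Rightarrow> 'a::comm_semiring_1"
  assumes "j \<le> m"
  shows "(\<Sum>k=j..m. of_nat (k choose j) * of_nat (m choose k) * F k)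
       = of_nat (m choose j) * (\<Sum>i\<le>m - j. of_nat ((m - j) choose i) * F (j + i))"
proof -
  have "(\<Sum>k=j..m. of_nat (k choose j) * of_nat (m choose k) * F k)
      = (\<Sum>i\<le>m - j. of_nat ((j + i) choose j) * of_nat (m choose (j + i)) * F (j + i))"
    using sum.shift_bounds_cl_nat_ivl[of "\<lambda>k. of_nat (k choose j) * of_nat (m choose k) * F k" 0 j "m - j"] assms
    by (simp add: atLeast0AtMost add.commute)
  also have "\<dots> = (\<Sum>i\<le>m - j. of_nat (m choose j) * (of_nat ((m - j) choose i) * F (j + i)))"
  proof (intro sum.cong refl)
    fix i assume "i \<in> {..m - j}"
    then have "j + i \<le> m"
      using assms by simp
    then have "(m choose (j + i)) * ((j + i) choose j) = (m choose j) * ((m - j) choose i)"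
      using choose_mult[of j "j + i" m] by simp
    then have "of_nat ((j + i) choose j) * of_nat (m choose (j + i)) = (of_nat (m choose j) * of_nat ((m - j) choose i) :: 'a)"
      by (simp only: of_nat_mult[symmetric] mult.commute[of "(j + i) choose j"])
    then show "of_nat ((j + i) choose j) * of_nat (m choose (j + i)) * F (j + i)
        = of_nat (m choose j) * (of_nat ((m - j) choose i) * F (j + i))"
      by (simp only: mult.assoc[symmetric])
  qed
  finally show ?thesis by (simp add: sum_distrib_left)
qed

text \<open>With N = m + \<alpha> + \<beta> + 1 the right-hand side is (-1)^m times the coefficient of ((1 - x)/2)^j
  in m! P^(\<beta>,\<alpha>)_m(x).\<close>

lemma sum_choose_choose_pochhammer:
  fixes N a :: "'a::comm_ring_1"
  assumes "j \<le> m"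
  shows "(\<Sum>k=j..m. of_nat (k choose j) * ((-1)^k * of_nat (m choose k) * pochhammer N k * pochhammer (a + of_nat k + 1) (m - k)))
       = (-1)^m * of_nat (m choose j) * pochhammer N j * pochhammer (N - a - of_nat m + of_nat j) (m - j)"
proof -
  define L where "L = m - j"
  have m: "m = j + L" using assms by (simp add: L_def)
  have "(\<Sum>k=j..m. of_nat (k choose j) * ((-1)^k * of_nat (m choose k) * pochhammer N k * pochhammer (a + of_nat k + 1) (m - k)))
      = (\<Sum>k=j..m. of_nat (k choose j) * of_nat (m choose k) * ((-1)^k * pochhammer N k * pochhammer (a + of_nat k + 1) (m - k)))"
    by (simp add: mult_ac)
  also have "\<dots> = of_nat (m choose j) * (\<Sum>i\<le>L. of_nat (L choose i)
      * ((-1)^(j + i) * pochhammer N (j + i) * pochhammer (a + of_nat (j + i) + 1) (m - (j + i))))"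
    unfolding L_def by (rule sum_choose_mult_choose[OF assms])
  also have "\<dots> = (-1)^j * of_nat (m choose j) * pochhammer N j *
      (\<Sum>i\<le>L. (-1)^i * of_nat (L choose i) * pochhammer (N + of_nat j) i * pochhammer (a + of_nat j + 1 + of_nat i) (L - i))"
  proof -
    have "pochhammer N (j + i) = pochhammer N j * pochhammer (N + of_nat j) i" for i
      by (rule pochhammer_product')
    then show ?thesis
      by (simp only:) (simp add: sum_distrib_left power_add m algebra_simps)
  qed
  also have "\<dots> = (-1)^j * of_nat (m choose j) * pochhammer N j * pochhammer (a + 1 - N) L"
    by (simp only: sum_alternating_choose_pochhammer) (simp add: algebra_simps)
  also have "pochhammer (a + 1 - N) L = (-1)^L * pochhammer (N - a - of_nat m + of_nat j) L"
  proof -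
    have "a + 1 - N = - (N - a - 1)" and "N - a - of_nat m + of_nat j = N - a - 1 - of_nat L + 1"
      by (simp_all add: m)
    then show ?thesis
      by (simp only: pochhammer_minus)
  qed
  finally show ?thesis by (simp add: m power_add mult_ac)
qed

lemma jacobiP_altdef:
  "jacobiP \<alpha> \<beta> m x = (1 / fact m) * (\<Sum>k\<le>m. (-1)^k * real (m choose k) * pochhammer (real m + \<alpha> + \<beta> + 1) k
        * pochhammer (\<alpha> + real k + 1) (m - k) * ((1 - x) / 2) ^ k)"
proof -
  have "pochhammer (- real m) k = (-1)^k * real (m choose k) * fact k" for k
    by (simp add: binomial_gbinomial gbinomial_pochhammer)
  then show ?thesis
    by (simp add: jacobiP_def atMost_atLeast0 mult_ac)
qed

lemma jacobiP_minus: "jacobiP \<alpha> \<beta> m (- x) = (-1)^m * jacobiP \<beta> \<alpha> m x"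
proof -
  define N where "N = real m + \<alpha> + \<beta> + 1"
  define t where "t = (1 - x) / 2"
  have "jacobiP \<alpha> \<beta> m (- x) = (1 / fact m) * (\<Sum>k\<le>m. ((-1)^k * real (m choose k) * pochhammer N k
        * pochhammer (\<alpha> + real k + 1) (m - k)) * (1 - t) ^ k)"
    by (simp add: jacobiP_altdef N_def t_def field_simps)
  also have "\<dots> = (1 / fact m) * (\<Sum>j\<le>m. (-1)^j * (\<Sum>k=j..m. real (k choose j) * ((-1)^k * real (m choose k)
        * pochhammer N k * pochhammer (\<alpha> + real k + 1) (m - k))) * t ^ j)"
    by (simp only: sum_mult_one_minus_power)
  also have "\<dots> = (1 / fact m) * (\<Sum>j\<le>m. (-1)^j * ((-1)^m * real (m choose j) * pochhammer N j
        * pochhammer (\<beta> + real j + 1) (m - j)) * t ^ j)"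
  proof (intro arg_cong[where f = "\<lambda>s. (1 / fact m) * s"] sum.cong refl)
    fix j assume "j \<in> {..m}"
    then have "j \<le> m" by simp
    have "N - \<alpha> - real m + real j = \<beta> + real j + 1"
      by (simp add: N_def)
    then show "(-1)^j * (\<Sum>k=j..m. real (k choose j) * ((-1)^k * real (m choose k)
        * pochhammer N k * pochhammer (\<alpha> + real k + 1) (m - k))) * t ^ j
      = (-1)^j * ((-1)^m * real (m choose j) * pochhammer N j * pochhammer (\<beta> + real j + 1) (m - j)) * t ^ j"
      by (simp only: sum_choose_choose_pochhammer[OF \<open>j \<le> m\<close>])
  qed
  also have "\<dots> = (-1)^m * jacobiP \<beta> \<alpha> m x"
    by (simp add: jacobiP_altdef N_def t_def sum_distrib_left algebra_simps)
  finally show ?thesis .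
qed

section \<open>Smoothness on an open set\<close>

definition smooth_on :: "real set \<Rightarrow> (real \<Rightarrow> real) \<Rightarrow> bool" where
  "smooth_on S f \<longleftrightarrow> (\<forall>j. \<forall>x\<in>S. (deriv ^^ j) f field_differentiable (at x))"

lemma deriv_cong_open:
  assumes "open S" "\<And>x. x \<in> S \<Longrightarrow> f x = g x" "x \<in> S"
  shows "deriv f x = deriv g x"
proof (rule deriv_cong_ev[OF _ refl])
  show "\<forall>\<^sub>F y in nhds x. f y = g y"
    unfolding eventually_nhds using assms by blast
qed

lemma field_differentiable_cong_open:
  assumes "open S" "\<And>x. x \<in> S \<Longrightarrow> f x = g x" "x \<in> S" "g field_differentiable (at x)"
  shows "f field_differentiable (at x)"
proof -
  obtain D where "(g has_field_derivative D) (at x)"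
    using assms(4) by (auto simp: field_differentiable_def)
  then have "(f has_field_derivative D) (at x)"
    by (rule has_field_derivative_transform_within_open[OF _ assms(1,3)]) (simp add: assms(2))
  then show ?thesis by (auto simp: field_differentiable_def)
qed

lemma higher_deriv_cong_open:
  assumes "open S" "\<And>x. x \<in> S \<Longrightarrow> f x = g x" "x \<in> S"
  shows "(deriv ^^ j) f x = (deriv ^^ j) g x"
  using assms(3)
proof (induction j arbitrary: x)
  case 0
  then show ?case by (simp add: assms(2))
next
  case (Suc j)
  then show ?case by (simp add: deriv_cong_open[OF assms(1) Suc.IH])
qed

lemma smooth_on_cong:
  assumes "open S" "\<And>x. x \<in> S \<Longrightarrow> f x = g x" "smooth_on S g"
  shows "smooth_on S f"
  unfolding smooth_on_def
proof (intro allI ballI)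
  fix j x assume x: "x \<in> S"
  have "(deriv ^^ j) g field_differentiable (at x)"
    using assms(3) x by (simp add: smooth_on_def)
  show "(deriv ^^ j) f field_differentiable (at x)"
    by (rule field_differentiable_cong_open[OF assms(1) _ x \<open>(deriv ^^ j) g field_differentiable (at x)\<close>])
      (rule higher_deriv_cong_open[OF assms(1,2)])
qed

inductive_set endpoint_power_sums :: "(real \<Rightarrow> real) set" where
  monomial: "(\<lambda>x. c * ((1 + x) / 2) powr r * ((1 - x) / 2) powr s) \<in> endpoint_power_sums"
| add: "f \<in> endpoint_power_sums \<Longrightarrow> g \<in> endpoint_power_sums \<Longrightarrow> (\<lambda>x. f x + g x) \<in> endpoint_power_sums"

lemma endpoint_power_sums_sum:
  assumes "\<And>k. F k \<in> endpoint_power_sums"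
  shows "(\<lambda>x. \<Sum>k\<le>(m::nat). F k x) \<in> endpoint_power_sums"
proof (induction m)
  case 0
  then show ?case using assms[of 0] by simp
next
  case (Suc m)
  then show ?case using endpoint_power_sums.add[OF Suc assms[of "Suc m"]] by simp
qed

lemma endpoint_power_sums_has_derivative:
  assumes "f \<in> endpoint_power_sums"
  shows "\<exists>f'\<in>endpoint_power_sums. \<forall>x\<in>{-1<..<1}. (f has_field_derivative f' x) (at x)"
  using assms
proof induction
  case (monomial c r s)
  let ?f' = "\<lambda>x. c * r / 2 * ((1 + x) / 2) powr (r - 1) * ((1 - x) / 2) powr s
      + (- c * s / 2) * ((1 + x) / 2) powr r * ((1 - x) / 2) powr (s - 1)"
  have "((\<lambda>x. c * ((1 + x) / 2) powr r * ((1 - x) / 2) powr s) has_field_derivative ?f' x) (at x)"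
    if "x \<in> {-1<..<1}" for x
  proof -
    have "(1 + x) / 2 > 0" "(1 - x) / 2 > 0"
      using that by auto
    then have "((\<lambda>x. ((1 + x) / 2) powr r) has_real_derivative r * ((1 + x) / 2) powr (r - 1) * (1 / 2)) (at x)"
      and "((\<lambda>x. ((1 - x) / 2) powr s) has_real_derivative s * ((1 - x) / 2) powr (s - 1) * (- 1 / 2)) (at x)"
      by (auto intro!: DERIV_fun_powr derivative_eq_intros)
    from DERIV_mult[OF DERIV_cmult[OF this(1), of c] this(2)] show ?thesis
      by (rule DERIV_cong) (simp add: algebra_simps)
  qed
  moreover have "?f' \<in> endpoint_power_sums"
    by (rule endpoint_power_sums.add; rule endpoint_power_sums.monomial)
  ultimately show ?case
    by (intro bexI[of _ ?f']) auto
next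
  case (add f g)
  obtain f' where "f' \<in> endpoint_power_sums" "\<forall>x\<in>{-1<..<1}. (f has_field_derivative f' x) (at x)"
    using add.IH(1) by blast
  moreover obtain g' where "g' \<in> endpoint_power_sums" "\<forall>x\<in>{-1<..<1}. (g has_field_derivative g' x) (at x)"
    using add.IH(2) by blast
  ultimately show ?case
    by (intro bexI[of _ "\<lambda>x. f' x + g' x"] endpoint_power_sums.add ballI DERIV_add) simp_all
qed

lemma smooth_on_endpoint_power_sums:
  assumes "f \<in> endpoint_power_sums"
  shows "smooth_on {-1<..<1} f"
proof -
  have higher_derivs: "\<exists>g\<in>endpoint_power_sums. \<forall>x\<in>{-1<..<1}. (deriv ^^ j) f x = g x" for j
  proof (induction j)
    case 0
    show ?case using assms by (intro bexI[of _ f]) simp_all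
  next
    case (Suc j)
    then obtain g where g: "g \<in> endpoint_power_sums" "\<forall>x\<in>{-1<..<1}. (deriv ^^ j) f x = g x"
      by blast
    obtain g' where g': "g' \<in> endpoint_power_sums" "\<forall>x\<in>{-1<..<1}. (g has_field_derivative g' x) (at x)"
      using endpoint_power_sums_has_derivative[OF g(1)] by blast
    have "(deriv ^^ Suc j) f x = g' x" if "x \<in> {-1<..<1}" for x
    proof -
      have "(deriv ^^ Suc j) f x = deriv ((deriv ^^ j) f) x"
        by simp
      also have "\<dots> = deriv g x"
        by (rule deriv_cong_open[OF open_greaterThanLessThan _ that]) (use g(2) in blast)
      also have "\<dots> = g' x"
        by (rule DERIV_imp_deriv) (use g'(2) that in blast)
      finally show ?thesis .
    qed
    then show ?case using g'(1) by blast
  qed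
  show ?thesis
    unfolding smooth_on_def
  proof (intro allI ballI)
    fix j x assume x: "x \<in> {-1<..<1::real}"
    obtain g where g: "g \<in> endpoint_power_sums" "\<forall>x\<in>{-1<..<1}. (deriv ^^ j) f x = g x"
      using higher_derivs by blast
    obtain g' where "\<forall>x\<in>{-1<..<1}. (g has_field_derivative g' x) (at x)"
      using endpoint_power_sums_has_derivative[OF g(1)] by blast
    then have "g field_differentiable (at x)"
      using x unfolding field_differentiable_def by blast
    show "(deriv ^^ j) f field_differentiable (at x)"
      by (rule field_differentiable_cong_open[OF open_greaterThanLessThan _ x \<open>g field_differentiable (at x)\<close>])
        (use g(2) in blast)
  qed
qed

lemma weighted_jacobiP_in_endpoint_power_sums:
  "\<exists>f\<in>endpoint_power_sums. \<forall>x\<in>{-1<..<1}.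
     ((1 + x) / 2) powr r * ((1 - x) / 2) powr s * jacobiP \<alpha> \<beta> m x = f x"
proof -
  define C where "C k = pochhammer (- real m) k * pochhammer (real m + \<alpha> + \<beta> + 1) k
        * pochhammer (\<alpha> + real k + 1) (m - k) / (fact k * fact m)" for k
  let ?f = "\<lambda>x. \<Sum>k\<le>m. C k * ((1 + x) / 2) powr r * ((1 - x) / 2) powr (s + real k)"
  have "?f \<in> endpoint_power_sums"
    by (rule endpoint_power_sums_sum, rule endpoint_power_sums.monomial)
  moreover have "((1 + x) / 2) powr r * ((1 - x) / 2) powr s * jacobiP \<alpha> \<beta> m x = ?f x"
    if "x \<in> {-1<..<1}" for x
  proof -
    have "((1 - x) / 2) powr (s + real k) = ((1 - x) / 2) powr s * ((1 - x) / 2) ^ k" for k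
      using that by (simp add: powr_add powr_realpow)
    then show ?thesis
      by (simp add: jacobiP_def atMost_atLeast0 sum_distrib_left C_def mult_ac)
  qed
  ultimately show ?thesis
    by (intro bexI[of _ ?f]) simp_all
qed

lemma smooth_on_weighted_jacobiP:
  "smooth_on {-1<..<1} (\<lambda>x. ((1 + x) / 2) powr r * ((1 - x) / 2) powr s * jacobiP \<alpha> \<beta> m x)"
proof -
  obtain f where "f \<in> endpoint_power_sums"
    "\<forall>x\<in>{-1<..<1}. ((1 + x) / 2) powr r * ((1 - x) / 2) powr s * jacobiP \<alpha> \<beta> m x = f x"
    using weighted_jacobiP_in_endpoint_power_sums by blast
  then show ?thesis
    by (intro smooth_on_cong[OF open_greaterThanLessThan _ smooth_on_endpoint_power_sums]) simp_all
qed

section \<open>Reflection of Wronskians\<close>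

lemma higher_deriv_reflect:
  assumes "open S" "\<And>y. y \<in> S \<Longrightarrow> - y \<in> S" "\<And>y. y \<in> S \<Longrightarrow> f y = c * F (- y)"
    and "smooth_on S F" "y \<in> S"
  shows "(deriv ^^ j) f y = (-1)^j * c * (deriv ^^ j) F (- y)"
  using assms(5)
proof (induction j arbitrary: y)
  case 0
  then show ?case by (simp add: assms(3))
next
  case (Suc j)
  have "(deriv ^^ j) F field_differentiable (at (- y))"
    using assms(2,4) Suc.prems by (simp add: smooth_on_def)
  then have "((deriv ^^ j) F has_field_derivative (deriv ^^ Suc j) F (- y)) (at (- y))"
    by (simp add: field_differentiable_derivI)
  from DERIV_cmult[OF DERIV_chain2[OF this DERIV_minus[OF DERIV_ident]], of "(-1)^j * c"]
  have reflected: "((\<lambda>z. (-1)^j * c * (deriv ^^ j) F (- z)) has_field_derivative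
      (-1)^Suc j * c * (deriv ^^ Suc j) F (- y)) (at y)"
    by simp
  have "(deriv ^^ Suc j) f y = deriv ((deriv ^^ j) f) y"
    by simp
  also have "\<dots> = deriv (\<lambda>z. (-1)^j * c * (deriv ^^ j) F (- z)) y"
    by (rule deriv_cong_open[OF assms(1) Suc.IH Suc.prems])
  also have "\<dots> = (-1)^Suc j * c * (deriv ^^ Suc j) F (- y)"
    by (rule DERIV_imp_deriv[OF reflected])
  finally show ?case .
qed

lemma prod_lessThan_minus_one_power: "(\<Prod>j<M. (-1::'a::comm_ring_1)^j) = (-1)^(M * (M - 1) div 2)"
proof -
  have "(\<Sum>j<M. j) = M * (M - 1) div 2"
    by (simp add: lessThan_atLeast0 Sum_Ico_nat)
  then show ?thesis
    by (simp add: power_sum[symmetric])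
qed

lemma det_mat_scale_rows_cols:
  fixes r s :: "nat \<Rightarrow> 'a::comm_ring_1"
  shows "Determinant.det (Matrix.mat n n (\<lambda>(i, j). r i * s j * A i j))
       = (\<Prod>i<n. r i) * (\<Prod>j<n. s j) * Determinant.det (Matrix.mat n n (\<lambda>(i, j). A i j))"
proof -
  have leibniz: "Determinant.det (Matrix.mat n n (\<lambda>(i, j). B i j))
      = (\<Sum>p | p permutes {..<n}. signof p * (\<Prod>i<n. B i (p i)))" for B :: "nat \<Rightarrow> nat \<Rightarrow> 'a"
    by (auto simp: det_def'[OF mat_carrier] atLeast0LessThan permutes_in_image intro!: sum.cong prod.cong)
  have "signof p * (\<Prod>i<n. r i * s (p i) * A i (p i))
      = (\<Prod>i<n. r i) * (\<Prod>j<n. s j) * (signof p * (\<Prod>i<n. A i (p i)))"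
    if "p permutes {..<n}" for p
  proof -
    have "(\<Prod>i<n. s (p i)) = (\<Prod>j<n. s j)"
      using prod.permute[OF that, of s] by (simp add: comp_def)
    then show ?thesis by (simp add: prod.distrib)
  qed
  then show ?thesis
    unfolding leibniz sum_distrib_left by (intro sum.cong) auto
qed

lemma wronskian_reflect:
  fixes c :: "nat \<Rightarrow> real"
  assumes "open S" "\<And>y. y \<in> S \<Longrightarrow> - y \<in> S" "length Fs = length fs"
    and "\<And>k y. k < length fs \<Longrightarrow> y \<in> S \<Longrightarrow> (fs ! k) y = c k * (Fs ! k) (- y)"
    and "\<forall>F\<in>set Fs. smooth_on S F" "\<eta> \<in> S"
  shows "wronskian fs (- \<eta>) = (-1)^(length fs * (length fs - 1) div 2) * (\<Prod>k<length fs. c k) * wronskian Fs \<eta>"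
proof -
  let ?M = "length fs"
  have entries: "(deriv ^^ j) (fs ! k) (- \<eta>) = (-1)^j * c k * (deriv ^^ j) (Fs ! k) \<eta>" if "k < ?M" for j k
    using higher_deriv_reflect[where f = "fs ! k" and F = "Fs ! k" and c = "c k", OF assms(1,2) assms(4)[OF that]]
      assms(2,3,5,6) that by simp
  have "wronskian fs (- \<eta>) = Determinant.det (Matrix.mat ?M ?M (\<lambda>(j, k). (-1)^j * c k * (deriv ^^ j) (Fs ! k) \<eta>))"
    unfolding wronskian_def by (intro arg_cong[where f = Determinant.det] eq_matI) (auto simp: entries)
  also have "\<dots> = (\<Prod>j<?M. (-1)^j) * (\<Prod>k<?M. c k) * wronskian Fs \<eta>"
    using det_mat_scale_rows_cols[where r = "\<lambda>j. (-1)^j" and s = c and A = "\<lambda>j k. (deriv ^^ j) (Fs ! k) \<eta>"]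
    by (simp add: wronskian_def assms(3))
  finally show ?thesis
    by (simp only: prod_lessThan_minus_one_power)
qed

section \<open>Seed functions and multi-indexed Jacobi polynomials\<close>

lemma mu_reflect: "mu g h s y = (-1)^fst s * mu h g (fst s, flip_type (snd s)) (- y)"
proof (cases s)
  case (Pair d t)
  then show ?thesis
    by (cases t) (simp_all add: jacobiP_minus[of _ _ d y] mult_ac power_mult_distrib[symmetric])
qed

lemma Pgh_reflect: "Pgh g h n y = (-1)^n * Pgh h g n (- y)"
  by (simp add: Pgh_def jacobiP_minus[of _ _ n y] power_mult_distrib[symmetric])

lemma smooth_on_mu: "smooth_on {-1<..<1} (mu g h s)"
proof (cases s)
  case (Pair d t)
  show ?thesis
  proof (cases t)
    case TI
    show ?thesis
      using smooth_on_weighted_jacobiP[of "1/2 - h" 0 "g - 1/2" "1/2 - h" d]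
      by (rule smooth_on_cong[OF open_greaterThanLessThan, rotated]) (simp add: Pair TI)
  next
    case TII
    show ?thesis
      using smooth_on_weighted_jacobiP[of 0 "1/2 - g" "1/2 - g" "h - 1/2" d]
      by (rule smooth_on_cong[OF open_greaterThanLessThan, rotated]) (simp add: Pair TII)
  qed
qed

lemma smooth_on_Pgh: "smooth_on {-1<..<1} (Pgh g h n)"
  using smooth_on_weighted_jacobiP[of 0 0 "g - 1/2" "h - 1/2" n]
  by (rule smooth_on_cong[OF open_greaterThanLessThan, rotated]) (simp add: Pgh_def)

lemma flip_type_eq_iff: "flip_type t = TI \<longleftrightarrow> t = TII" "flip_type t = TII \<longleftrightarrow> t = TI"
  by (cases t; simp)+

lemma count_I_flipD: "count_I (flipD D) = count_II D"
  by (induction D) (auto simp: count_I_def count_II_def flipD_def flip_type_eq_iff)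

lemma count_II_flipD: "count_II (flipD D) = count_I D"
  by (induction D) (auto simp: count_I_def count_II_def flipD_def flip_type_eq_iff)

lemma prod_minus_one_power_fst: "(\<Prod>k<length D. (-1::real)^fst (D ! k)) = (-1)^sum_list (map fst D)"
  by (simp add: sum_list_sum_nth power_sum atLeast0LessThan)

lemma map_mu_nth_reflect:
  "k < length D \<Longrightarrow> (map (mu g h) D ! k) y = (-1)^fst (D ! k) * (map (mu h g) (flipD D) ! k) (- y)"
  by (simp add: flipD_def case_prod_beta mu_reflect[of g h])

lemma Xi_reflect:
  assumes "\<eta> \<in> {-1<..<1}"
  shows "Xi D g h (- \<eta>) = (-1)^(length D * (length D - 1) div 2 + sum_list (map fst D)) * Xi (flipD D) h g \<eta>"
proof -
  have "wronskian (map (mu g h) D) (- \<eta>) = (-1)^(length D * (length D - 1) div 2)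
      * (\<Prod>k<length D. (-1)^fst (D ! k)) * wronskian (map (mu h g) (flipD D)) \<eta>"
    using assms map_mu_nth_reflect
    by (subst wronskian_reflect[OF open_greaterThanLessThan]) (auto simp: flipD_def smooth_on_mu)
  then show ?thesis
    by (simp add: Xi_def count_I_flipD count_II_flipD prod_minus_one_power_fst power_add mult_ac)
qed

lemma PD_reflect:
  assumes "\<eta> \<in> {-1<..<1}"
  shows "PD D n g h (- \<eta>) = (-1)^(n + length D * (length D + 1) div 2 + sum_list (map fst D)) * PD (flipD D) n h g \<eta>"
proof -
  define c :: "nat \<Rightarrow> real" where "c k = (if k < length D then (-1)^fst (D ! k) else (-1)^n)" for k
  have "((map (mu g h) D @ [Pgh g h n]) ! k) y = c k * ((map (mu h g) (flipD D) @ [Pgh h g n]) ! k) (- y)"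
    if "k < Suc (length D)" for k y
    using that map_mu_nth_reflect[of k D g h y] Pgh_reflect[of g h n y]
    by (cases "k < length D") (auto simp: c_def nth_append flipD_def)
  then have "wronskian (map (mu g h) D @ [Pgh g h n]) (- \<eta>) = (-1)^(Suc (length D) * length D div 2)
      * (\<Prod>k<Suc (length D). c k) * wronskian (map (mu h g) (flipD D) @ [Pgh h g n]) \<eta>"
    using assms
    by (subst wronskian_reflect[OF open_greaterThanLessThan]) (auto simp: flipD_def smooth_on_mu smooth_on_Pgh)
  then show ?thesis
    by (simp add: PD_def c_def count_I_flipD count_II_flipD prod_minus_one_power_fst power_add mult_ac)
qed

theorem mainTheorem5:
  fixes g h :: real and D :: "seed list" and n :: nat and \<eta> :: real
  assumes "g > 1/2" and "h > 1/2"
    and "\<forall>s \<in> set D. seed_label g h s"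
    and "distinct D"
    and "-1 < \<eta>" and "\<eta> < 1"
  shows "PD D n g h (- \<eta>) =
           (-1) ^ (n + length D * (length D + 1) div 2 + sum_list (map fst D)) * PD (flipD D) n h g \<eta>
       \<and> Xi D g h (- \<eta>) =
           (-1) ^ (length D * (length D - 1) div 2 + sum_list (map fst D)) * Xi (flipD D) h g \<eta>"
  \<comment> \<open>The identity is formal: only -1 < \<eta> < 1 is needed, not the conditions on g, h and D.\<close>
  using assms(5,6) by (simp add: PD_reflect Xi_reflect)

end
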